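(* Let $F_1=F_2=1$, $F_{k+1}=F_k+F_{k-1}$, and let $A=\{F_k : k\ge 1\}=\{1,2,3,5,8,\dots\}$. Then for every $n\ge 1$, $\mathrm{Total}(n,A)=F_{2n+1}-1$.
   Context: For an integer $n\ge 0$ and a set $A$ of positive integers with $1\in A$, the abstract generalized 2048 game $\mathrm{AGG}(n,A)$ is played on $n$ indistinguishable cells. A position assigns to each cell either nothing (empty) or a tile with a value in $A$; the initial position has all cells empty. A step, performable from any position with at least one empty cell, consists of: (i) placing a new tile of value $1$ into a chosen empty cell; then (ii) optionally choosing pairwise disjoint sets of nonempty cells, each with tile-value sum in $A$, and merging each set into a single tile of that sum placed in one of its cells, the other cells of the set becoming empty. The game ends when after a step all cells are nonempty. A position is reachable if obtainable from the initial position by finitely many steps; its total value is the sum of its tile values. $\mathrm{Total}(n,A)$ is the supremum of total values of reachable positions of $\mathrm{AGG}(n,A)$. *)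

theory Defs
  imports Main "HOL-Library.Multiset" "HOL-Library.Extended_Nat" "HOL-Number_Theory.Fib"
begin

text \<open>A position of AGG(n,A) is the multiset of tile values on the (indistinguishable)
  cells; empty cells are not recorded, so a position has size at most n.\<close>

text \<open>One step: place a tile of value 1 into an empty cell (requires size P < n), then
  optionally merge pairwise disjoint groups of tiles (each group a nonempty sub-multiset
  with sum in A) into single tiles of their sums.\<close>
definition agg_step :: "nat \<Rightarrow> nat set \<Rightarrow> nat multiset \<Rightarrow> nat multiset \<Rightarrow> bool" where
  "agg_step n A P Q \<longleftrightarrow> size P < n \<and>
     (\<exists>R Gs. P + {#1#} = R + sum_list Gs \<and>
        (\<forall>G\<in>set Gs. G \<noteq> {#} \<and> sum_mset G \<in> A) \<and>
        Q = R + mset (map sum_mset Gs))"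

definition agg_reachable :: "nat \<Rightarrow> nat set \<Rightarrow> nat multiset \<Rightarrow> bool" where
  "agg_reachable n A P \<longleftrightarrow> (agg_step n A)\<^sup>*\<^sup>* {#} P"

definition agg_Total :: "nat \<Rightarrow> nat set \<Rightarrow> enat" where
  "agg_Total n A = (SUP P\<in>{P. agg_reachable n A P}. enat (sum_mset P))"

definition fib_set :: "nat set" where
  "fib_set = {fib k | k. k \<ge> 1}"

end

theory Submission
  imports Defs
begin

text \<open>Write \<open>F(k)\<close> for \<open>fib k\<close>. Upper bound: in every reachable position on \<open>n\<close> cells and
  for every \<open>j \<le> n\<close>, at most \<open>n - j\<close> tiles exceed \<open>F(2j)\<close>. Since no Fibonacci number lies
  strictly between \<open>F(2j)\<close> and \<open>F(2j+1)\<close>, a merge can only create a new tile above \<open>F(2j)\<close>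
  by absorbing an old one or by spending at least \<open>F(2j+1)\<close> of the mass of tiles below
  \<open>F(2j)\<close>; and the invariant itself bounds that mass, by induction on \<open>j\<close>, by less than
  \<open>F(2j+1) + (n - j - #large) F(2j)\<close>. For \<open>j = n\<close> no tile exceeds \<open>F(2n)\<close>, so the total is
  below \<open>F(2n+1)\<close>.
  Lower bound: a single tile \<open>F(k)\<close>, \<open>k \<le> 2m\<close>, can be built on \<open>m\<close> cells by building
  \<open>F(k-1)\<close>, then \<open>F(k-2)\<close> on the remaining \<open>m - 1\<close> cells, merging in the last step.
  A tile \<open>F(2n+2)\<close> next to an optimal position on \<open>n\<close> cells gives \<open>F(2n+3) - 1\<close>.\<close>

section \<open>Large tiles and small mass\<close>

definition large_tiles :: "nat \<Rightarrow> nat multiset \<Rightarrow> nat" where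
  "large_tiles c X = size (filter_mset (\<lambda>x. c < x) X)"

definition small_mass :: "nat \<Rightarrow> nat multiset \<Rightarrow> nat" where
  "small_mass c X = sum_mset (filter_mset (\<lambda>x. x \<le> c) X)"

lemma large_tiles_union [simp]: "large_tiles c (X + Y) = large_tiles c X + large_tiles c Y"
  by (simp add: large_tiles_def)

lemma small_mass_union [simp]: "small_mass c (X + Y) = small_mass c X + small_mass c Y"
  by (simp add: small_mass_def)

lemma large_tiles_add_mset [simp]:
  "large_tiles c (add_mset x X) = (if c < x then Suc (large_tiles c X) else large_tiles c X)"
  by (simp add: large_tiles_def)

lemma large_tiles_eq_0_iff: "large_tiles c X = 0 \<longleftrightarrow> (\<forall>x\<in>#X. x \<le> c)"
  by (auto simp: large_tiles_def filter_mset_eq_conv not_less)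

lemma small_mass_eq_sum_mset: "\<forall>x\<in>#X. x \<le> c \<Longrightarrow> small_mass c X = sum_mset X"
  unfolding small_mass_def by (subst filter_mset_eq_conv[THEN iffD2]) auto

lemma sum_mset_le_size_mult: "\<forall>x\<in>#M. x \<le> (c::nat) \<Longrightarrow> sum_mset M \<le> size M * c"
  by (induction M) auto

lemma large_tiles_split:
  assumes "c \<le> d"
  shows "large_tiles c X = large_tiles d X + size (filter_mset (\<lambda>x. c < x \<and> x \<le> d) X)"
proof -
  have "filter_mset (\<lambda>x. c < x) X
      = filter_mset (\<lambda>x. d < x) X + filter_mset (\<lambda>x. c < x \<and> x \<le> d) X"
    by (rule multiset_eqI) (use assms in auto)
  then show ?thesis
    unfolding large_tiles_def by simp
qed

lemma small_mass_split:
  assumes "c \<le> d"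
  shows "small_mass d X = small_mass c X + sum_mset (filter_mset (\<lambda>x. c < x \<and> x \<le> d) X)"
proof -
  have "filter_mset (\<lambda>x. x \<le> d) X
      = filter_mset (\<lambda>x. x \<le> c) X + filter_mset (\<lambda>x. c < x \<and> x \<le> d) X"
    by (rule multiset_eqI) (use assms in auto)
  then show ?thesis
    unfolding small_mass_def by simp
qed

lemma large_tiles_merge_group:
  assumes gap: "\<forall>a\<in>A. c < a \<longrightarrow> F \<le> a" and "sum_mset G \<in> A"
  shows "F * large_tiles c {#sum_mset G#} \<le> F * large_tiles c G + small_mass c G"
proof (cases "large_tiles c G = 0")
  case True
  then have "small_mass c G = sum_mset G"
    by (simp add: large_tiles_eq_0_iff small_mass_eq_sum_mset)
  then show ?thesis
    using gap \<open>sum_mset G \<in> A\<close> by (auto simp: large_tiles_def)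
next
  case False
  have "large_tiles c {#sum_mset G#} \<le> 1"
    by (simp add: large_tiles_def)
  with False have "large_tiles c {#sum_mset G#} \<le> large_tiles c G"
    by linarith
  then show ?thesis
    by (simp add: trans_le_add1)
qed

lemma large_tiles_merge:
  assumes gap: "\<forall>a\<in>A. c < a \<longrightarrow> F \<le> a" and "\<forall>G\<in>set Gs. sum_mset G \<in> A"
  shows "F * large_tiles c (mset (map sum_mset Gs))
    \<le> F * large_tiles c (sum_list Gs) + small_mass c (sum_list Gs)"
  using assms(2)
proof (induction Gs)
  case Nil
  then show ?case
    by (simp add: large_tiles_def)
next
  case (Cons G Gs)
  have "F * large_tiles c {#sum_mset G#} \<le> F * large_tiles c G + small_mass c G"
    using Cons.prems by (intro large_tiles_merge_group[OF gap]) simp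
  moreover have "large_tiles c (mset (map sum_mset (G # Gs)))
      = large_tiles c {#sum_mset G#} + large_tiles c (mset (map sum_mset Gs))"
    by (simp add: large_tiles_def)
  ultimately show ?case
    using Cons by (simp add: distrib_left)
qed

lemma fib_Suc_le_of_less: "fib m < fib k \<Longrightarrow> fib (Suc m) \<le> fib k"
  by (metis fib_mono not_less_eq_eq not_le)

lemma fib_set_gap: "\<forall>a\<in>fib_set. fib m < a \<longrightarrow> fib (Suc m) \<le> a"
  by (auto simp: fib_set_def intro: fib_Suc_le_of_less)

lemma fib_even_le_odd: "fib (2 * j) \<le> fib (2 * j + 1)"
  by (rule fib_mono) simp

section \<open>The invariant\<close>

definition large_tiles_bounded :: "nat \<Rightarrow> nat multiset \<Rightarrow> bool" where
  "large_tiles_bounded n X \<longleftrightarrow> (\<forall>j\<le>n. large_tiles (fib (2 * j)) X + j \<le> n)"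

text \<open>Stated additively, this says \<open>small_mass + 1 \<le> F(2j+1) + (n - j - large_tiles) F(2j)\<close>.\<close>

lemma small_mass_bound:
  assumes "large_tiles_bounded n X" "j \<le> n"
  shows "small_mass (fib (2 * j)) X + 1 + (large_tiles (fib (2 * j)) X + j) * fib (2 * j)
    \<le> fib (2 * j + 1) + n * fib (2 * j)"
  using assms(2)
proof (induction j)
  case 0
  have "small_mass 0 X = 0"
    using sum_mset_le_size_mult[of "filter_mset (\<lambda>x. x \<le> 0) X" 0] by (simp add: small_mass_def)
  then show ?case
    by simp
next
  case (Suc j)
  define a F c where "a = fib (2 * j)" and "F = fib (2 * j + 1)" and "c = fib (2 * Suc j)"
  define M where "M = filter_mset (\<lambda>x. a < x \<and> x \<le> c) X"
  have c: "c = a + F" and F': "fib (2 * Suc j + 1) = c + F"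
    using fib_plus_2[of "2 * j"] fib_plus_2[of "2 * j + 1"] by (simp_all add: a_def F_def c_def)
  have large: "large_tiles a X = large_tiles c X + size M"
    unfolding M_def using c by (intro large_tiles_split) simp
  have small: "small_mass c X = small_mass a X + sum_mset M"
    unfolding M_def using c by (intro small_mass_split) simp
  have "sum_mset M \<le> size M * c"
    unfolding M_def by (rule sum_mset_le_size_mult) auto
  obtain t where t: "n = large_tiles a X + j + t"
    using assms(1) Suc.prems le_Suc_ex unfolding large_tiles_bounded_def a_def
    by (metis Suc_leD)
  have "small_mass a X + 1 \<le> F + t * a"
    using Suc t by (simp add: a_def F_def algebra_simps)
  also have "\<dots> \<le> F + t * c"
    using c by simp
  finally have "small_mass c X + 1 + (large_tiles c X + Suc j) * c
      \<le> F + t * c + (large_tiles a X + j) * c + c"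
    using small large \<open>sum_mset M \<le> size M * c\<close> by (simp add: algebra_simps)
  then show ?case
    using t F' by (simp add: c_def algebra_simps)
qed

lemma large_tiles_bounded_place:
  assumes "large_tiles_bounded n P" "size P < n"
  shows "large_tiles_bounded n (P + {#1#})"
  unfolding large_tiles_bounded_def
proof (intro allI impI)
  fix j assume "j \<le> n"
  show "large_tiles (fib (2 * j)) (P + {#1#}) + j \<le> n"
  proof (cases j)
    case 0
    have "large_tiles 0 P \<le> size P"
      unfolding large_tiles_def by (rule size_filter_mset_lesseq)
    with 0 \<open>size P < n\<close> show ?thesis
      by simp
  next
    case (Suc i)
    then have "0 < fib (2 * j)"
      by (intro fib_neq_0_nat) simp
    then show ?thesis
      using assms(1) \<open>j \<le> n\<close> by (simp add: large_tiles_bounded_def)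
  qed
qed

lemma large_tiles_bounded_merge:
  assumes inv: "large_tiles_bounded n (R + sum_list Gs)"
    and sums: "\<forall>G\<in>set Gs. sum_mset G \<in> fib_set"
  shows "large_tiles_bounded n (R + mset (map sum_mset Gs))"
  unfolding large_tiles_bounded_def
proof (intro allI impI)
  fix j assume "j \<le> n"
  define X Q where "X = R + sum_list Gs" and "Q = R + mset (map sum_mset Gs)"
  define a F where "a = fib (2 * j)" and "F = fib (2 * j + 1)"
  have "F * large_tiles a (mset (map sum_mset Gs))
      \<le> F * large_tiles a (sum_list Gs) + small_mass a (sum_list Gs)"
    using large_tiles_merge[OF fib_set_gap[of "2 * j"] sums] by (simp add: a_def F_def)
  then have merged: "F * large_tiles a Q \<le> F * large_tiles a X + small_mass a X"
    by (simp add: X_def Q_def algebra_simps)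
  obtain t where t: "n = large_tiles a X + j + t"
    using inv \<open>j \<le> n\<close> le_Suc_ex unfolding large_tiles_bounded_def X_def a_def by blast
  have "small_mass a X + 1 \<le> F + t * a"
    using small_mass_bound[OF inv[folded X_def] \<open>j \<le> n\<close>] t
    by (simp add: a_def F_def algebra_simps)
  also have "\<dots> \<le> F + t * F"
    using fib_even_le_odd[of j] by (simp add: a_def F_def)
  finally have "F * large_tiles a Q < F * (large_tiles a X + t + 1)"
    using merged by (simp add: algebra_simps)
  then have "large_tiles a Q < large_tiles a X + t + 1"
    by (rule mult_left_less_imp_less) simp
  then show "large_tiles (fib (2 * j)) (R + mset (map sum_mset Gs)) + j \<le> n"
    using t by (simp add: a_def Q_def)
qed

lemma large_tiles_bounded_step:
  assumes "large_tiles_bounded n P" "agg_step n fib_set P Q"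
  shows "large_tiles_bounded n Q"
proof -
  obtain R Gs where "size P < n" "P + {#1#} = R + sum_list Gs"
    "\<forall>G\<in>set Gs. G \<noteq> {#} \<and> sum_mset G \<in> fib_set" "Q = R + mset (map sum_mset Gs)"
    using assms(2) unfolding agg_step_def by blast
  then show ?thesis
    using large_tiles_bounded_place[OF assms(1)] large_tiles_bounded_merge by metis
qed

lemma agg_reachable_large_tiles_bounded:
  assumes "agg_reachable n fib_set Q"
  shows "large_tiles_bounded n Q"
proof -
  have "large_tiles_bounded n {#}"
    by (simp add: large_tiles_bounded_def large_tiles_def)
  with assms show ?thesis
    unfolding agg_reachable_def
    by (induction rule: rtranclp_induct) (auto intro: large_tiles_bounded_step)
qed

lemma agg_reachable_sum_mset_le:
  assumes "agg_reachable n fib_set Q"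
  shows "sum_mset Q \<le> fib (2 * n + 1) - 1"
proof -
  have inv: "large_tiles_bounded n Q"
    using assms by (rule agg_reachable_large_tiles_bounded)
  then have "large_tiles (fib (2 * n)) Q = 0"
    unfolding large_tiles_bounded_def by fastforce
  then have "small_mass (fib (2 * n)) Q = sum_mset Q"
    by (simp add: large_tiles_eq_0_iff small_mass_eq_sum_mset)
  then show ?thesis
    using small_mass_bound[OF inv, of n] \<open>large_tiles (fib (2 * n)) Q = 0\<close> by simp
qed

section \<open>Building large tiles\<close>

lemma agg_step_add_tiles:
  assumes "agg_step m A P Q"
  shows "agg_step (m + size B) A (B + P) (B + Q)"
proof -
  obtain R Gs where "size P < m" "P + {#1#} = R + sum_list Gs"
    "\<forall>G\<in>set Gs. G \<noteq> {#} \<and> sum_mset G \<in> A" "Q = R + mset (map sum_mset Gs)"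
    using assms unfolding agg_step_def by blast
  then show ?thesis
    unfolding agg_step_def
    by (intro conjI exI[of _ "B + R"] exI[of _ Gs]) (simp_all add: ac_simps)
qed

lemma agg_steps_add_tiles:
  "(agg_step m A)\<^sup>*\<^sup>* P Q \<Longrightarrow> (agg_step (m + size B) A)\<^sup>*\<^sup>* (B + P) (B + Q)"
  by (induction rule: rtranclp_induct) (auto intro: agg_step_add_tiles rtranclp.rtrancl_into_rtrancl)

lemma agg_step_merge_all:
  assumes "size P < m" "sum_mset P + 1 = a" "a \<in> A"
  shows "agg_step m A P {#a#}"
  unfolding agg_step_def
  by (intro conjI exI[of _ "{#}"] exI[of _ "[P + {#1#}]"]) (use assms in auto)

lemma fib_in_fib_set: "1 \<le> k \<Longrightarrow> fib k \<in> fib_set"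
  by (auto simp: fib_set_def)

text \<open>Building \<open>F(k)\<close> must stop one placement short: the last placement merges everything at
  once, which is what allows \<open>F(k-2)\<close> to be completed next to a finished \<open>F(k-1)\<close>.\<close>

lemma agg_steps_one_short_of_fib:
  assumes "1 \<le> k" "k \<le> 2 * m"
  shows "\<exists>P. (agg_step m fib_set)\<^sup>*\<^sup>* {#} P \<and> size P < m \<and> sum_mset P + 1 = fib k"
  using assms
proof (induction k arbitrary: m rule: less_induct)
  case (less k)
  show ?case
  proof (cases "k \<le> 2")
    case True
    then have "fib k = 1"
      using less.prems by (cases k; cases "k - 1") auto
    then show ?thesis
      using less.prems by (intro exI[of _ "{#}"]) auto
  next
    case False
    then have "2 \<le> m"
      using less.prems by simp
    have "\<exists>P. (agg_step m fib_set)\<^sup>*\<^sup>* {#} P \<and> size P < m \<and> sum_mset P + 1 = fib (k - 1)"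
      using less.prems False by (intro less.IH) auto
    then obtain P1 where P1: "(agg_step m fib_set)\<^sup>*\<^sup>* {#} P1" "size P1 < m"
        "sum_mset P1 + 1 = fib (k - 1)"
      by blast
    have "agg_step m fib_set P1 {#fib (k - 1)#}"
      using P1 False by (intro agg_step_merge_all fib_in_fib_set) auto
    with P1(1) have build_first: "(agg_step m fib_set)\<^sup>*\<^sup>* {#} {#fib (k - 1)#}"
      by (rule rtranclp.rtrancl_into_rtrancl)
    have "\<exists>P. (agg_step (m - 1) fib_set)\<^sup>*\<^sup>* {#} P \<and> size P < m - 1
        \<and> sum_mset P + 1 = fib (k - 2)"
      using less.prems False by (intro less.IH) auto
    then obtain P2 where P2: "(agg_step (m - 1) fib_set)\<^sup>*\<^sup>* {#} P2" "size P2 < m - 1"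
        "sum_mset P2 + 1 = fib (k - 2)"
      by blast
    have "(agg_step m fib_set)\<^sup>*\<^sup>* {#fib (k - 1)#} ({#fib (k - 1)#} + P2)"
      using agg_steps_add_tiles[OF P2(1), of "{#fib (k - 1)#}"] \<open>2 \<le> m\<close> by simp
    moreover have "fib k = fib (k - 1) + fib (k - 2)"
      using fib_plus_2[of "k - 2"] False by (simp add: numeral_2_eq_2 Suc_diff_Suc)
    ultimately show ?thesis
      using build_first P2 \<open>2 \<le> m\<close>
      by (intro exI[of _ "{#fib (k - 1)#} + P2"]) auto
  qed
qed

lemma agg_steps_single_fib:
  assumes "1 \<le> k" "k \<le> 2 * m"
  shows "(agg_step m fib_set)\<^sup>*\<^sup>* {#} {#fib k#}"
proof -
  obtain P where P: "(agg_step m fib_set)\<^sup>*\<^sup>* {#} P" "size P < m" "sum_mset P + 1 = fib k"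
    using agg_steps_one_short_of_fib[of k m] assms by auto
  have "agg_step m fib_set P {#fib k#}"
    using P assms by (intro agg_step_merge_all fib_in_fib_set) auto
  with P(1) show ?thesis
    by (rule rtranclp.rtrancl_into_rtrancl)
qed

lemma ex_agg_reachable_sum_mset_eq: "\<exists>P. agg_reachable n fib_set P \<and> sum_mset P = fib (2 * n + 1) - 1"
proof (induction n)
  case 0
  then show ?case
    by (intro exI[of _ "{#}"]) (simp add: agg_reachable_def)
next
  case (Suc n)
  then obtain P where P: "(agg_step n fib_set)\<^sup>*\<^sup>* {#} P" "sum_mset P = fib (2 * n + 1) - 1"
    unfolding agg_reachable_def by blast
  have "(agg_step (Suc n) fib_set)\<^sup>*\<^sup>* {#} {#fib (2 * n + 2)#}"
    by (rule agg_steps_single_fib) simp_all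
  moreover have "(agg_step (Suc n) fib_set)\<^sup>*\<^sup>* {#fib (2 * n + 2)#} ({#fib (2 * n + 2)#} + P)"
    using agg_steps_add_tiles[OF P(1), of "{#fib (2 * n + 2)#}"] by simp
  moreover have "fib (2 * Suc n + 1) = fib (2 * n + 2) + fib (2 * n + 1)"
    using fib_plus_2[of "2 * n + 1"] by simp
  moreover have "0 < fib (2 * n + 1)"
    by (intro fib_neq_0_nat) simp
  ultimately show ?case
    using P(2) unfolding agg_reachable_def
    by (intro exI[of _ "{#fib (2 * n + 2)#} + P"]) auto
qed

theorem mainTheorem12:
  fixes n :: nat
  assumes "n \<ge> 1"
  shows "agg_Total n fib_set = enat (fib (2 * n + 1) - 1)"
proof -
  obtain P where "agg_reachable n fib_set P" "sum_mset P = fib (2 * n + 1) - 1"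
    using ex_agg_reachable_sum_mset_eq by blast
  then show ?thesis
    unfolding agg_Total_def
  proof (intro antisym)
    show "(SUP Q\<in>{Q. agg_reachable n fib_set Q}. enat (sum_mset Q)) \<le> enat (fib (2 * n + 1) - 1)"
      by (rule SUP_least) (auto dest: agg_reachable_sum_mset_le)
  qed (auto intro: SUP_upper2)
qed

end
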